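(* Assume the chain $\{z_t\}$ described in the context is stationary with stationary distribution $\pi$. Let $N_0\ge1$ be an integer such that every entry of the $N_0$-step transition matrix $M^{(N_0)}$ of $\{z_t\}$ is positive. Let $\delta=\min_{i,j\in[Z]}M^{(N_0)}_{i,j}>0$. Let $f:\mathbb{H}^N\times\mathbb{B}^N\to\mathbb{B}^N$ be fixed, and let the loss satisfy $|l(f,z)|\le B$ for all $z$, for some constant $B>0$. For a sample $S=(z_1,\dots,z_T)$ of the chain, define $err_S^T(f)=\frac1T\sum_{t=1}^T l(f,z_t)$ and $err_\pi(f)=E_{z\sim\pi}\,l(f,z)$. Then for every $\epsilon>0$ and every $T>2BN_0/(Z\delta\epsilon)$, $$P\big(|err_S^T(f)-err_\pi(f)|\ge\epsilon\big)\le 2\exp\!\left(-\frac{Z^2\delta^2\,(T\epsilon-2BN_0/(Z\delta))^2}{2TB^2N_0^2}\right).$$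
   Context: $\{z_t\}$ is the Markov chain $z_t=(h_t,b_t,b_{t+1})$. It is a time-homogeneous, irreducible, aperiodic Markov chain on a finite state space of $Z$ states, identified with $[Z]=\{1,\dots,Z\}$, with transition matrix $M$. Here $h_t\in\mathbb{H}^N$ (joint feedback) and $b_t\in\mathbb{B}^N$ (joint behavior), with $\mathbb{H},\mathbb{B}$ finite. For a prediction function $f:\mathbb{H}^N\times\mathbb{B}^N\to\mathbb{B}^N$ and a state $z=(h,b,b')$, the loss is $l(f,z)=\ell(f(h,b),b')$ for a fixed loss function $\ell$ on $\mathbb{B}^N\times\mathbb{B}^N$; an example is the 0-1 loss $\mathbf 1[f(h,b)\ne b']$. *)

theory Defs
  imports "HOL-Probability.Probability"
begin

text \<open>States z = (h, b, b') with h joint feedback in H^N, b, b' joint behaviour in B^N.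
  The chain lives on a finite state space S (of Z = card S states) of such triples,
  with transition matrix P (indexed by states).\<close>

type_synonym ('h, 'b, 'n) state = "('h ^ 'n) \<times> ('b ^ 'n) \<times> ('b ^ 'n)"

definition stochastic_matrix :: "'z set \<Rightarrow> ('z \<Rightarrow> 'z \<Rightarrow> real) \<Rightarrow> bool" where
  "stochastic_matrix S P \<longleftrightarrow> (\<forall>i\<in>S. \<forall>j\<in>S. P i j \<ge> 0) \<and> (\<forall>i\<in>S. (\<Sum>j\<in>S. P i j) = 1)"

fun mat_pow :: "'z set \<Rightarrow> ('z \<Rightarrow> 'z \<Rightarrow> real) \<Rightarrow> nat \<Rightarrow> 'z \<Rightarrow> 'z \<Rightarrow> real" where
  "mat_pow S P 0 i j = (if i = j then 1 else 0)"
| "mat_pow S P (Suc n) i j = (\<Sum>k\<in>S. mat_pow S P n i k * P k j)"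

definition irreducible_chain :: "'z set \<Rightarrow> ('z \<Rightarrow> 'z \<Rightarrow> real) \<Rightarrow> bool" where
  "irreducible_chain S P \<longleftrightarrow> (\<forall>i\<in>S. \<forall>j\<in>S. \<exists>n. mat_pow S P n i j > 0)"

definition aperiodic_chain :: "'z set \<Rightarrow> ('z \<Rightarrow> 'z \<Rightarrow> real) \<Rightarrow> bool" where
  "aperiodic_chain S P \<longleftrightarrow> (\<forall>i\<in>S. Gcd {n. n \<ge> 1 \<and> mat_pow S P n i i > 0} = 1)"

definition stationary_dist :: "'z set \<Rightarrow> ('z \<Rightarrow> 'z \<Rightarrow> real) \<Rightarrow> ('z \<Rightarrow> real) \<Rightarrow> bool" where
  "stationary_dist S P \<pi> \<longleftrightarrow> (\<forall>i\<in>S. \<pi> i \<ge> 0) \<and> (\<Sum>i\<in>S. \<pi> i) = 1 \<and>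
     (\<forall>j\<in>S. (\<Sum>i\<in>S. \<pi> i * P i j) = \<pi> j)"

text \<open>X_1, X_2, ... is a (time-homogeneous) Markov chain on S with transition matrix P,
  started in (hence stationary with) the distribution \<pi>: its finite-dimensional
  distributions are those of the chain.\<close>
definition stationary_markov_chain ::
  "'a measure \<Rightarrow> (nat \<Rightarrow> 'a \<Rightarrow> 'z) \<Rightarrow> 'z set \<Rightarrow> ('z \<Rightarrow> 'z \<Rightarrow> real) \<Rightarrow> ('z \<Rightarrow> real) \<Rightarrow> bool" where
  "stationary_markov_chain M X S P \<pi> \<longleftrightarrow>
     prob_space M \<and> (\<forall>t. X t \<in> measurable M (count_space UNIV)) \<and>
     (\<forall>n \<ge> 1. \<forall>s :: nat \<Rightarrow> 'z.
        measure M {\<omega> \<in> space M. \<forall>t\<in>{1..n}. X t \<omega> = s t} =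
        (if (\<forall>t\<in>{1..n}. s t \<in> S) then \<pi> (s 1) * (\<Prod>t\<in>{1..<n}. P (s t) (s (Suc t))) else 0))"

definition loss :: "('b ^ 'n \<Rightarrow> 'b ^ 'n \<Rightarrow> real) \<Rightarrow> ('h ^ 'n \<Rightarrow> 'b ^ 'n \<Rightarrow> 'b ^ 'n)
    \<Rightarrow> ('h, 'b, 'n) state \<Rightarrow> real" where
  "loss ell f z = (case z of (h, b, b') \<Rightarrow> ell (f h b) b')"

definition emp_err :: "('b ^ 'n \<Rightarrow> 'b ^ 'n \<Rightarrow> real) \<Rightarrow> ('h ^ 'n \<Rightarrow> 'b ^ 'n \<Rightarrow> 'b ^ 'n)
    \<Rightarrow> (nat \<Rightarrow> ('h, 'b, 'n) state) \<Rightarrow> nat \<Rightarrow> real" where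
  "emp_err ell f zs T = (1 / real T) * (\<Sum>t=1..T. loss ell f (zs t))"

definition pi_err :: "('b ^ 'n \<Rightarrow> 'b ^ 'n \<Rightarrow> real) \<Rightarrow> ('h ^ 'n \<Rightarrow> 'b ^ 'n \<Rightarrow> 'b ^ 'n)
    \<Rightarrow> ('h, 'b, 'n) state set \<Rightarrow> (('h, 'b, 'n) state \<Rightarrow> real) \<Rightarrow> real" where
  "pi_err ell f S \<pi> = (\<Sum>z\<in>S. \<pi> z * loss ell f z)"

end

theory Submission
  imports Defs
begin

(*
  Let g = l(f,.) - err_pi(f) be the centred loss and H_m = g + M g + ... + M^m g the truncated
  solution of the Poisson equation, so that H_(m+1) = g + M H_m.  The Doeblin condition
  M^(N0) >= delta entrywise contracts the oscillation (max - min) of M^k g by the factor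
  1 - Z delta every N0 steps, hence every H_m has oscillation at most c = 2 B N0 / (Z delta).

  Peeling off the last state of a path and applying Hoeffding's lemma to the one-step
  conditional distribution M(x,.) of H_m shows E exp(l (g(z_1) + ... + g(z_T))) <=
  exp(T l^2 c^2 / 8); the first state is handled by the stationary distribution, under which
  H_m has mean zero.  A Chernoff bound, applied to g and -g, gives
  P(|err_S^T(f) - err_pi(f)| >= eps) <= 2 exp(-2 T eps^2 / c^2), which is stronger than the
  stated bound.  Probabilities of events of the chain are computed as sums over paths using
  the finite-dimensional distributions of the chain.
*)

section \<open>Powers of stochastic matrices\<close>

lemma stochastic_mat_pow:
  assumes st: "stochastic_matrix S P" and fin: "finite S"
  shows "stochastic_matrix S (mat_pow S P k)"
proof (induction k)
  case 0
  show ?case unfolding stochastic_matrix_def using fin by (auto simp: sum.delta)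
next
  case (Suc k)
  have Pk_nonneg: "\<forall>i\<in>S. \<forall>j\<in>S. mat_pow S P k i j \<ge> 0"
    and Pk_rows: "\<forall>i\<in>S. (\<Sum>j\<in>S. mat_pow S P k i j) = 1"
    using Suc unfolding stochastic_matrix_def by auto
  have P_nonneg: "\<forall>i\<in>S. \<forall>j\<in>S. P i j \<ge> 0" and P_rows: "\<forall>i\<in>S. (\<Sum>j\<in>S. P i j) = 1"
    using st unfolding stochastic_matrix_def by auto
  show ?case unfolding stochastic_matrix_def
  proof (intro conjI ballI)
    fix i j assume "i \<in> S" "j \<in> S"
    then show "0 \<le> mat_pow S P (Suc k) i j" using Pk_nonneg P_nonneg by (auto intro!: sum_nonneg)
  next
    fix i assume i: "i \<in> S"
    have "(\<Sum>j\<in>S. mat_pow S P (Suc k) i j) = (\<Sum>l\<in>S. \<Sum>j\<in>S. mat_pow S P k i l * P l j)"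
      unfolding mat_pow.simps by (rule sum.swap)
    also have "\<dots> = (\<Sum>l\<in>S. mat_pow S P k i l * (\<Sum>j\<in>S. P l j))"
      by (simp add: sum_distrib_left)
    also have "\<dots> = 1" using P_rows Pk_rows i by simp
    finally show "(\<Sum>j\<in>S. mat_pow S P (Suc k) i j) = 1" .
  qed
qed

lemma mat_pow_add:
  assumes "j \<in> S" and fin: "finite S"
  shows "mat_pow S P (a + b) i j = (\<Sum>l\<in>S. mat_pow S P a i l * mat_pow S P b l j)"
  using assms(1)
proof (induction b arbitrary: j)
  case 0
  then show ?case using fin by (simp add: if_distrib sum.delta' cong: if_cong)
next
  case (Suc b)
  have "mat_pow S P (a + Suc b) i j = (\<Sum>k\<in>S. (\<Sum>l\<in>S. mat_pow S P a i l * mat_pow S P b l k) * P k j)"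
    using Suc.IH by simp
  also have "\<dots> = (\<Sum>k\<in>S. \<Sum>l\<in>S. mat_pow S P a i l * (mat_pow S P b l k * P k j))"
    by (simp add: sum_distrib_right mult.assoc)
  also have "\<dots> = (\<Sum>l\<in>S. \<Sum>k\<in>S. mat_pow S P a i l * (mat_pow S P b l k * P k j))"
    by (rule sum.swap)
  also have "\<dots> = (\<Sum>l\<in>S. mat_pow S P a i l * mat_pow S P (Suc b) l j)"
    by (simp add: sum_distrib_left)
  finally show ?case .
qed

definition mat_pow_apply :: "'z set \<Rightarrow> ('z \<Rightarrow> 'z \<Rightarrow> real) \<Rightarrow> nat \<Rightarrow> ('z \<Rightarrow> real) \<Rightarrow> 'z \<Rightarrow> real" where
  "mat_pow_apply S P k g x = (\<Sum>y\<in>S. mat_pow S P k x y * g y)"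

lemma mat_pow_apply_add:
  assumes "x \<in> S" and fin: "finite S"
  shows "mat_pow_apply S P (a + b) g x = mat_pow_apply S P a (mat_pow_apply S P b g) x"
proof -
  have "mat_pow_apply S P (a + b) g x
      = (\<Sum>y\<in>S. \<Sum>l\<in>S. mat_pow S P a x l * (mat_pow S P b l y * g y))"
    unfolding mat_pow_apply_def
    by (intro sum.cong) (auto simp: mat_pow_add fin sum_distrib_right mult.assoc)
  also have "\<dots> = (\<Sum>l\<in>S. \<Sum>y\<in>S. mat_pow S P a x l * (mat_pow S P b l y * g y))"
    by (rule sum.swap)
  also have "\<dots> = mat_pow_apply S P a (mat_pow_apply S P b g) x"
    unfolding mat_pow_apply_def by (simp add: sum_distrib_left)
  finally show ?thesis .
qed

lemma mat_pow_apply_0: "finite S \<Longrightarrow> x \<in> S \<Longrightarrow> mat_pow_apply S P 0 g x = g x"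
  unfolding mat_pow_apply_def
  by (subst sum.cong[OF refl, where h="\<lambda>y. if x = y then g y else 0"]) (auto simp: sum.delta)

lemma mat_pow_apply_1:
  "finite S \<Longrightarrow> x \<in> S \<Longrightarrow> mat_pow_apply S P 1 g x = (\<Sum>y\<in>S. P x y * g y)"
proof -
  assume "finite S" "x \<in> S"
  then have "mat_pow S P 1 x y = P x y" for y
    by (simp, subst sum.cong[OF refl, where h="\<lambda>k. if x = k then P k y else 0"]) (auto simp: sum.delta)
  then show ?thesis unfolding mat_pow_apply_def by simp
qed

lemma stationary_mat_pow_apply:
  assumes sd: "stationary_dist S P \<pi>" and fin: "finite S"
  shows "(\<Sum>x\<in>S. \<pi> x * mat_pow_apply S P k g x) = (\<Sum>x\<in>S. \<pi> x * g x)"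
proof (induction k arbitrary: g)
  case 0
  then show ?case by (intro sum.cong) (auto simp: mat_pow_apply_0[OF fin])
next
  case (Suc k)
  have "(\<Sum>x\<in>S. \<pi> x * mat_pow_apply S P (Suc k) g x)
      = (\<Sum>x\<in>S. \<pi> x * mat_pow_apply S P k (mat_pow_apply S P 1 g) x)"
    using mat_pow_apply_add[OF _ fin, where a=k and b=1 and P=P and g=g] by (intro sum.cong) auto
  also have "\<dots> = (\<Sum>x\<in>S. \<pi> x * mat_pow_apply S P 1 g x)" by (rule Suc.IH)
  also have "\<dots> = (\<Sum>x\<in>S. \<Sum>y\<in>S. \<pi> x * P x y * g y)"
    by (intro sum.cong refl, subst mat_pow_apply_1[OF fin]) (simp_all add: sum_distrib_left mult_ac)
  also have "\<dots> = (\<Sum>y\<in>S. \<Sum>x\<in>S. \<pi> x * P x y * g y)"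
    by (rule sum.swap)
  also have "\<dots> = (\<Sum>y\<in>S. (\<Sum>x\<in>S. \<pi> x * P x y) * g y)"
    by (simp add: sum_distrib_right)
  also have "\<dots> = (\<Sum>y\<in>S. \<pi> y * g y)" using sd unfolding stationary_dist_def by simp
  finally show ?case .
qed

section \<open>Oscillation and the Doeblin contraction\<close>

definition osc_le :: "'z set \<Rightarrow> ('z \<Rightarrow> real) \<Rightarrow> real \<Rightarrow> bool" where
  "osc_le S f c \<longleftrightarrow> (\<forall>x\<in>S. \<forall>y\<in>S. f x - f y \<le> c)"

lemma osc_le_mono: "osc_le S f c \<Longrightarrow> c \<le> c' \<Longrightarrow> osc_le S f c'"
  unfolding osc_le_def by force

lemma osc_le_uminus: "osc_le S (\<lambda>x. - f x) c \<longleftrightarrow> osc_le S f c"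
  unfolding osc_le_def by force

lemma osc_le_sum:
  assumes "\<And>k. k \<in> K \<Longrightarrow> osc_le S (F k) (c k)"
  shows "osc_le S (\<lambda>x. \<Sum>k\<in>K. F k x) (\<Sum>k\<in>K. c k)"
  unfolding osc_le_def
proof (intro ballI)
  fix x y assume "x \<in> S" "y \<in> S"
  then have "(\<Sum>k\<in>K. F k x - F k y) \<le> (\<Sum>k\<in>K. c k)"
    using assms unfolding osc_le_def by (intro sum_mono) auto
  then show "(\<Sum>k\<in>K. F k x) - (\<Sum>k\<in>K. F k y) \<le> (\<Sum>k\<in>K. c k)" by (simp add: sum_subtractf)
qed

lemma weighted_average_difference:
  assumes u: "\<forall>j\<in>S. u j \<ge> 0" and v: "\<forall>k\<in>S. v k \<ge> 0" and osc: "osc_le S f w"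
  shows "(\<Sum>k\<in>S. v k) * (\<Sum>j\<in>S. u j * f j) - (\<Sum>j\<in>S. u j) * (\<Sum>k\<in>S. v k * f k)
         \<le> (\<Sum>j\<in>S. u j) * (\<Sum>k\<in>S. v k) * w"
proof -
  have "(\<Sum>k\<in>S. v k) * (\<Sum>j\<in>S. u j * f j) = (\<Sum>j\<in>S. \<Sum>k\<in>S. u j * v k * f j)"
    by (simp add: sum_distrib_left sum_distrib_right mult_ac)
  moreover have "(\<Sum>j\<in>S. u j) * (\<Sum>k\<in>S. v k * f k) = (\<Sum>j\<in>S. \<Sum>k\<in>S. u j * v k * f k)"
    by (simp add: sum_distrib_right) (simp add: sum_distrib_left mult_ac)
  ultimately have "(\<Sum>k\<in>S. v k) * (\<Sum>j\<in>S. u j * f j) - (\<Sum>j\<in>S. u j) * (\<Sum>k\<in>S. v k * f k)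
      = (\<Sum>j\<in>S. \<Sum>k\<in>S. u j * v k * (f j - f k))"
    by (simp add: sum_subtractf right_diff_distrib)
  also have "\<dots> \<le> (\<Sum>j\<in>S. \<Sum>k\<in>S. u j * v k * w)"
    using u v osc unfolding osc_le_def by (intro sum_mono mult_left_mono) auto
  also have "\<dots> = (\<Sum>j\<in>S. u j * ((\<Sum>k\<in>S. v k) * w))"
    by (simp add: sum_distrib_left sum_distrib_right mult_ac)
  also have "\<dots> = (\<Sum>j\<in>S. u j) * (\<Sum>k\<in>S. v k) * w"
    by (simp add: sum_distrib_right mult.assoc)
  finally show ?thesis .
qed

text \<open>For \<open>d = 0\<close> this is non-expansiveness.\<close>
lemma osc_doeblin_contraction:
  assumes st: "stochastic_matrix S Q" and fin: "finite S"
    and lb: "\<forall>i\<in>S. \<forall>j\<in>S. Q i j \<ge> d" and osc: "osc_le S f w"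
  shows "osc_le S (\<lambda>x. \<Sum>y\<in>S. Q x y * f y) ((1 - real (card S) * d) * w)"
  unfolding osc_le_def
proof (intro ballI)
  fix x y assume x: "x \<in> S" and y: "y \<in> S"
  define r where "r = 1 - real (card S) * d"
  define R where "R i j = Q i j - d" for i j
  have R_nonneg: "\<forall>j\<in>S. R i j \<ge> 0" if "i \<in> S" for i using lb that unfolding R_def by auto
  have R_rows: "(\<Sum>j\<in>S. R i j) = r" if "i \<in> S" for i
    using st that unfolding stochastic_matrix_def R_def r_def by (simp add: sum_subtractf)
  have Q_split: "(\<Sum>j\<in>S. Q i j * f j) = d * (\<Sum>j\<in>S. f j) + (\<Sum>j\<in>S. R i j * f j)" for i
    unfolding R_def by (simp add: algebra_simps sum.distrib sum_distrib_left sum_subtractf)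
  define D where "D = (\<Sum>j\<in>S. R x j * f j) - (\<Sum>k\<in>S. R y k * f k)"
  have "r * D \<le> r * (r * w)"
    using weighted_average_difference[OF R_nonneg[OF x] R_nonneg[OF y] osc]
    unfolding D_def R_rows[OF x] R_rows[OF y] by (simp add: right_diff_distrib mult_ac)
  moreover have "D = 0" if "r = 0"
  proof -
    have "R x j = 0" "R y j = 0" if "j \<in> S" for j
      using R_rows[OF x] R_rows[OF y] R_nonneg[OF x] R_nonneg[OF y] fin \<open>r = 0\<close> that
      by (metis sum_nonneg_eq_0_iff)+
    then show ?thesis unfolding D_def by simp
  qed
  moreover have "r \<ge> 0" using R_rows[OF x] R_nonneg[OF x] by (metis sum_nonneg)
  ultimately have "D \<le> r * w" by (cases "r = 0") auto
  then show "(\<Sum>j\<in>S. Q x j * f j) - (\<Sum>k\<in>S. Q y k * f k) \<le> (1 - real (card S) * d) * w"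
    using Q_split[of x] Q_split[of y] unfolding D_def r_def by simp
qed

lemma osc_mat_pow_apply:
  assumes st: "stochastic_matrix S P" and fin: "finite S" and N0: "N0 \<ge> 1"
    and lb: "\<forall>i\<in>S. \<forall>j\<in>S. mat_pow S P N0 i j \<ge> d" and osc: "osc_le S g w"
  shows "osc_le S (mat_pow_apply S P k g) (w * (1 - real (card S) * d) ^ (k div N0))"
proof (induction k rule: less_induct)
  case (less k)
  define r where "r = 1 - real (card S) * d"
  show ?case
  proof (cases "k < N0")
    case True
    have "osc_le S (mat_pow_apply S P k g) ((1 - real (card S) * 0) * w)"
      unfolding mat_pow_apply_def using stochastic_mat_pow[OF st fin] osc fin
      by (intro osc_doeblin_contraction) (auto simp: stochastic_matrix_def)
    then show ?thesis using True by simp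
  next
    case False
    then have k_split: "k = N0 + (k - N0)" and k_div: "k div N0 = Suc ((k - N0) div N0)"
      using N0 by (auto simp: le_div_geq)
    have "osc_le S (mat_pow_apply S P (k - N0) g) (w * r ^ ((k - N0) div N0))"
      using less.IH[of "k - N0"] False N0 unfolding r_def by simp
    then have "osc_le S (\<lambda>x. \<Sum>y\<in>S. mat_pow S P N0 x y * mat_pow_apply S P (k - N0) g y)
        (r * (w * r ^ ((k - N0) div N0)))"
      unfolding r_def by (rule osc_doeblin_contraction[OF stochastic_mat_pow[OF st fin] fin lb])
    moreover have "(\<Sum>y\<in>S. mat_pow S P N0 x y * mat_pow_apply S P (k - N0) g y)
        = mat_pow_apply S P k g x" if "x \<in> S" for x
      using mat_pow_apply_add[OF that fin, of P N0 "k - N0" g] k_split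
      by (simp add: mat_pow_apply_def)
    ultimately show ?thesis unfolding osc_le_def r_def k_div by (simp add: mult_ac)
  qed
qed

lemma doeblin_factor_nonneg:
  assumes st: "stochastic_matrix S Q" and lb: "\<forall>i\<in>S. \<forall>j\<in>S. Q i j \<ge> d" and "S \<noteq> {}"
  shows "1 - real (card S) * d \<ge> 0"
proof -
  obtain x where x: "x \<in> S" using assms(3) by auto
  have "(\<Sum>j\<in>S. Q x j - d) = 1 - real (card S) * d"
    using st x unfolding stochastic_matrix_def by (simp add: sum_subtractf)
  moreover have "(\<Sum>j\<in>S. Q x j - d) \<ge> 0" using lb x by (intro sum_nonneg) auto
  ultimately show ?thesis by simp
qed

text \<open>Summing the geometric decay, counting each power \<open>N0\<close> times.\<close>
lemma sum_power_div_le: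
  fixes r :: real
  assumes r0: "0 \<le> r" and r1: "r < 1" and N0: "N0 \<ge> 1"
  shows "(\<Sum>k\<le>n. r ^ (k div N0)) \<le> real N0 / (1 - r)"
proof -
  have "n \<le> n * N0" using N0 by simp
  then have "k < Suc n * N0" if "k \<le> n" for k
    unfolding mult_Suc using that N0 by linarith
  then have "{..n} \<subseteq> {..<Suc n * N0}" by auto
  then have "(\<Sum>k\<le>n. r ^ (k div N0)) \<le> (\<Sum>k<Suc n * N0. r ^ (k div N0))"
    using r0 by (intro sum_mono2) auto
  also have "\<dots> = (\<Sum>m<Suc n. \<Sum>k\<in>{m * N0..<m * N0 + N0}. r ^ (k div N0))"
    by (rule sum.nat_group[symmetric])
  also have "\<dots> = (\<Sum>m<Suc n. real N0 * r ^ m)"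
  proof (rule sum.cong[OF refl])
    fix m
    have "k div N0 = m" if "k \<in> {m * N0..<m * N0 + N0}" for k
      using N0 that by (auto intro!: div_nat_eqI simp: mult.commute)
    then show "(\<Sum>k\<in>{m * N0..<m * N0 + N0}. r ^ (k div N0)) = real N0 * r ^ m" by simp
  qed
  also have "\<dots> = real N0 * ((1 - r ^ Suc n) / (1 - r))"
    unfolding sum_distrib_left[symmetric] using r1 by (subst sum_gp_strict) simp_all
  also have "\<dots> \<le> real N0 * (1 / (1 - r))"
    using r0 r1 by (intro mult_left_mono divide_right_mono) auto
  finally show ?thesis by simp
qed

section \<open>Truncated solutions of the Poisson equation\<close>

definition poisson_sum :: "'z set \<Rightarrow> ('z \<Rightarrow> 'z \<Rightarrow> real) \<Rightarrow> ('z \<Rightarrow> real) \<Rightarrow> nat \<Rightarrow> 'z \<Rightarrow> real" where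
  "poisson_sum S P g n x = (\<Sum>k\<le>n. mat_pow_apply S P k g x)"

lemma poisson_sum_0: "finite S \<Longrightarrow> x \<in> S \<Longrightarrow> poisson_sum S P g 0 x = g x"
  unfolding poisson_sum_def by (simp add: mat_pow_apply_0)

lemma poisson_sum_Suc:
  assumes fin: "finite S" and x: "x \<in> S"
  shows "poisson_sum S P g (Suc n) x = g x + (\<Sum>y\<in>S. P x y * poisson_sum S P g n y)"
proof -
  have "mat_pow_apply S P (Suc k) g x = (\<Sum>y\<in>S. P x y * mat_pow_apply S P k g y)" for k
    using mat_pow_apply_add[OF x fin, of P 1 k g] mat_pow_apply_1[OF fin x] by simp
  then have "(\<Sum>k\<le>n. mat_pow_apply S P (Suc k) g x) = (\<Sum>y\<in>S. P x y * poisson_sum S P g n y)"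
    unfolding poisson_sum_def by (simp add: sum_distrib_left sum.swap[of _ "{..n}"])
  then show ?thesis
    unfolding poisson_sum_def sum.atMost_Suc_shift by (simp add: mat_pow_apply_0[OF fin x])
qed

lemma poisson_sum_uminus: "poisson_sum S P (\<lambda>x. - g x) n = (\<lambda>x. - poisson_sum S P g n x)"
  unfolding poisson_sum_def mat_pow_apply_def by (simp add: sum_negf)

lemma stationary_poisson_sum:
  assumes sd: "stationary_dist S P \<pi>" and fin: "finite S" and g_mean: "(\<Sum>x\<in>S. \<pi> x * g x) = 0"
  shows "(\<Sum>x\<in>S. \<pi> x * poisson_sum S P g n x) = 0"
proof -
  have "(\<Sum>x\<in>S. \<pi> x * poisson_sum S P g n x) = (\<Sum>k\<le>n. \<Sum>x\<in>S. \<pi> x * mat_pow_apply S P k g x)"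
    unfolding poisson_sum_def by (simp add: sum_distrib_left sum.swap[of _ S])
  then show ?thesis using stationary_mat_pow_apply[OF sd fin] g_mean by simp
qed

lemma osc_poisson_sum:
  assumes st: "stochastic_matrix S P" and fin: "finite S" and ne: "S \<noteq> {}" and N0: "N0 \<ge> 1"
    and lb: "\<forall>i\<in>S. \<forall>j\<in>S. mat_pow S P N0 i j \<ge> d" and d: "d > 0"
    and osc: "osc_le S g w" and w0: "w \<ge> 0"
  shows "osc_le S (poisson_sum S P g n) (w * real N0 / (real (card S) * d))"
proof -
  define r where "r = 1 - real (card S) * d"
  have r0: "r \<ge> 0"
    unfolding r_def by (rule doeblin_factor_nonneg[OF stochastic_mat_pow[OF st fin] lb ne])
  have r1: "r < 1" unfolding r_def using d fin ne by (simp add: card_gt_0_iff)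
  have "osc_le S (poisson_sum S P g n) (\<Sum>k\<le>n. w * r ^ (k div N0))"
    unfolding poisson_sum_def r_def
    by (intro osc_le_sum osc_mat_pow_apply[OF st fin N0 lb osc])
  moreover have "(\<Sum>k\<le>n. w * r ^ (k div N0)) \<le> w * (real N0 / (1 - r))"
    unfolding sum_distrib_left[symmetric] using sum_power_div_le[OF r0 r1 N0] w0
    by (rule mult_left_mono)
  ultimately show ?thesis unfolding r_def by (auto elim: osc_le_mono)
qed

section \<open>Hoeffding's lemma for finite distributions\<close>

text \<open>If \<open>f\<close> has oscillation at most \<open>c\<close> on the support of a finite distribution \<open>p\<close>, then
  \<open>E exp(l f) \<le> exp(l E f + l^2 c^2 / 8)\<close>; obtained from the library version by viewing
  \<open>p\<close> as a density on the counting measure.\<close>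
lemma finite_Hoeffdings_lemma:
  fixes p f :: "'z \<Rightarrow> real"
  assumes fin: "finite A" and p_nonneg: "\<forall>y\<in>A. p y \<ge> 0" and p_sum: "(\<Sum>y\<in>A. p y) = 1"
    and osc: "osc_le A f c" and l: "l > 0"
  shows "(\<Sum>y\<in>A. p y * exp (l * f y)) \<le> exp (l * (\<Sum>y\<in>A. p y * f y) + l\<^sup>2 * c\<^sup>2 / 8)"
proof -
  define D where "D = density (count_space A) (\<lambda>y. ennreal (p y))"
  have A_ne: "A \<noteq> {}" using p_sum by auto
  define a where "a = Min (f ` A)"
  have f_range: "f y \<in> {a..a + c}" if y: "y \<in> A" for y
  proof -
    have "a \<in> f ` A" unfolding a_def using fin A_ne by (intro Min_in) auto
    then obtain y0 where y0: "y0 \<in> A" "f y0 = a" by auto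
    have "a \<le> f y" unfolding a_def using fin y by simp
    moreover have "f y - f y0 \<le> c" using osc y y0 unfolding osc_le_def by blast
    ultimately show ?thesis using y0 by simp
  qed
  have nn_int: "(\<integral>\<^sup>+y. ennreal (g y) \<partial>D) = ennreal (\<Sum>y\<in>A. p y * g y)"
    if "\<forall>y\<in>A. g y \<ge> 0" for g
    unfolding D_def using fin p_nonneg that
    by (simp add: nn_integral_density nn_integral_count_space_finite sum_nonneg flip: ennreal_mult sum_ennreal)
  have int: "(\<integral>y. g y \<partial>D) = (\<Sum>y\<in>A. p y * g y)" for g
    unfolding D_def using fin p_nonneg
    by (subst integral_density) (auto simp: lebesgue_integral_count_space_finite)
  interpret D: prob_space D
  proof
    show "emeasure D (space D) = 1"
      using nn_int[of "\<lambda>_. 1"] p_sum by (simp add: nn_integral_const)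
  qed
  interpret interval_bounded_random_variable D f a "a + c"
  proof
    show "f \<in> borel_measurable D" by (simp add: D_def)
    show "AE y in D. f y \<in> {a..a + c}" by (rule AE_I2) (use f_range in \<open>auto simp: D_def\<close>)
  qed
  define \<mu> where "\<mu> = (\<Sum>y\<in>A. p y * f y)"
  have "ennreal (\<Sum>y\<in>A. p y * exp (l * (f y - \<mu>))) \<le> ennreal (exp (l\<^sup>2 * c\<^sup>2 / 8))"
    using Hoeffdings_lemma_nn_integral[OF l] nn_int[of "\<lambda>y. exp (l * (f y - \<mu>))"]
    by (simp add: int \<mu>_def)
  then have centred: "(\<Sum>y\<in>A. p y * exp (l * (f y - \<mu>))) \<le> exp (l\<^sup>2 * c\<^sup>2 / 8)"
    by simp
  have "(\<Sum>y\<in>A. p y * exp (l * f y)) = exp (l * \<mu>) * (\<Sum>y\<in>A. p y * exp (l * (f y - \<mu>)))"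
    by (simp add: sum_distrib_left right_diff_distrib exp_diff mult_ac)
  also have "\<dots> \<le> exp (l * \<mu>) * exp (l\<^sup>2 * c\<^sup>2 / 8)"
    using centred by simp
  finally show ?thesis by (simp add: \<mu>_def exp_add)
qed

section \<open>Exponential moments along paths of the chain\<close>

definition paths :: "'z set \<Rightarrow> nat \<Rightarrow> (nat \<Rightarrow> 'z) set" where
  "paths S n = PiE {1..n} (\<lambda>_. S)"

definition path_weight :: "('z \<Rightarrow> 'z \<Rightarrow> real) \<Rightarrow> ('z \<Rightarrow> real) \<Rightarrow> nat \<Rightarrow> (nat \<Rightarrow> 'z) \<Rightarrow> real" where
  "path_weight P \<pi> n s = \<pi> (s 1) * (\<Prod>t\<in>{1..<n}. P (s t) (s (Suc t)))"

lemma finite_paths: "finite S \<Longrightarrow> finite (paths S n)"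
  unfolding paths_def by (simp add: finite_PiE)

lemma paths_mem: "s \<in> paths S n \<Longrightarrow> t \<in> {1..n} \<Longrightarrow> s t \<in> S"
  unfolding paths_def by auto

lemma path_weight_nonneg:
  assumes "stochastic_matrix S P" "stationary_dist S P \<pi>" "s \<in> paths S n" "n \<ge> 1"
  shows "path_weight P \<pi> n s \<ge> 0"
  unfolding path_weight_def using assms paths_mem[OF assms(3)]
  unfolding stochastic_matrix_def stationary_dist_def
  by (intro mult_nonneg_nonneg prod_nonneg) auto

lemma sum_paths_Suc:
  assumes fin: "finite S"
  shows "(\<Sum>s\<in>paths S (Suc n). F s) = (\<Sum>s\<in>paths S n. \<Sum>y\<in>S. F (s(Suc n := y)))"
proof -
  have eq: "paths S (Suc n) = (\<lambda>(y, s). s(Suc n := y)) ` (S \<times> paths S n)"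
    unfolding paths_def by (simp add: atLeastAtMostSuc_conv PiE_insert_eq)
  have inj: "inj_on (\<lambda>(y, s). s(Suc n := y)) (S \<times> paths S n)"
    unfolding paths_def using inj_combinator[of "Suc n" "{1..n}" "\<lambda>_. S"] by simp
  have "(\<Sum>s\<in>paths S (Suc n). F s) = (\<Sum>y\<in>S. \<Sum>s\<in>paths S n. F (s(Suc n := y)))"
    unfolding eq sum.reindex[OF inj] by (simp add: sum.cartesian_product case_prod_unfold)
  also have "\<dots> = (\<Sum>s\<in>paths S n. \<Sum>y\<in>S. F (s(Suc n := y)))"
    by (rule sum.swap)
  finally show ?thesis .
qed

lemma sum_paths_Suc_weighted:
  assumes fin: "finite S" and n: "n \<ge> 1"
  shows "(\<Sum>s\<in>paths S (Suc n). path_weight P \<pi> (Suc n) s * F s)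
       = (\<Sum>s\<in>paths S n. path_weight P \<pi> n s * (\<Sum>y\<in>S. P (s n) y * F (s(Suc n := y))))"
proof -
  have "path_weight P \<pi> (Suc n) (s(Suc n := y)) = path_weight P \<pi> n s * P (s n) y" for s y
  proof -
    have "(\<Prod>t\<in>{1..<n}. P ((s(Suc n := y)) t) ((s(Suc n := y)) (Suc t)))
        = (\<Prod>t\<in>{1..<n}. P (s t) (s (Suc t)))"
      by (intro prod.cong) auto
    then show ?thesis unfolding path_weight_def using n by (simp add: prod.atLeastLessThan_Suc)
  qed
  then show ?thesis
    unfolding sum_paths_Suc[OF fin] by (simp add: sum_distrib_left mult_ac)
qed

lemma sum_paths_one:
  assumes fin: "finite S"
  shows "(\<Sum>s\<in>paths S 1. path_weight P \<pi> 1 s * F (s 1)) = (\<Sum>y\<in>S. \<pi> y * F y)"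
  using sum_paths_Suc[OF fin, where n=0 and F="\<lambda>s. path_weight P \<pi> 1 s * F (s 1)"]
  by (simp add: paths_def path_weight_def)

text \<open>One step of the exponential moment bound: by Hoeffding's lemma for the transition
  distribution \<open>M(x,.)\<close> and \<open>H_(m+1) = g + M H_m\<close>.\<close>
lemma poisson_step_mgf:
  assumes fin: "finite S" and st: "stochastic_matrix S P" and x: "x \<in> S"
    and osc: "osc_le S (poisson_sum S P g m) c" and l: "l > 0"
  shows "exp (l * g x) * (\<Sum>y\<in>S. P x y * exp (l * poisson_sum S P g m y))
         \<le> exp (l * poisson_sum S P g (Suc m) x + l\<^sup>2 * c\<^sup>2 / 8)"
proof -
  have "(\<Sum>y\<in>S. P x y * exp (l * poisson_sum S P g m y))
      \<le> exp (l * (\<Sum>y\<in>S. P x y * poisson_sum S P g m y) + l\<^sup>2 * c\<^sup>2 / 8)"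
    using st x by (intro finite_Hoeffdings_lemma[OF fin _ _ osc l]) (auto simp: stochastic_matrix_def)
  then have "exp (l * g x) * (\<Sum>y\<in>S. P x y * exp (l * poisson_sum S P g m y))
      \<le> exp (l * g x) * exp (l * (\<Sum>y\<in>S. P x y * poisson_sum S P g m y) + l\<^sup>2 * c\<^sup>2 / 8)"
    by simp
  also have "\<dots> = exp (l * poisson_sum S P g (Suc m) x + l\<^sup>2 * c\<^sup>2 / 8)"
    by (simp add: poisson_sum_Suc[OF fin x] distrib_left exp_add[symmetric] add.assoc)
  finally show ?thesis .
qed

text \<open>Exponential moment of the partial sums, with the remaining future of the chain
  accounted for by \<open>H_m\<close> at the last state: it grows at most by \<open>exp(l^2 c^2/8)\<close> per step.\<close>
lemma path_mgf:
  assumes fin: "finite S" and st: "stochastic_matrix S P" and sd: "stationary_dist S P \<pi>"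
    and g_mean: "(\<Sum>x\<in>S. \<pi> x * g x) = 0"
    and osc: "\<And>m. osc_le S (poisson_sum S P g m) c" and l: "l > 0" and n: "n \<ge> 1"
  shows "(\<Sum>s\<in>paths S n. path_weight P \<pi> n s *
            exp (l * ((\<Sum>t\<in>{1..<n}. g (s t)) + poisson_sum S P g m (s n))))
         \<le> exp (real n * (l\<^sup>2 * c\<^sup>2 / 8))"
  using n
proof (induction n arbitrary: m rule: nat_induct_at_least)
  case base
  have "\<forall>y\<in>S. \<pi> y \<ge> 0" "(\<Sum>y\<in>S. \<pi> y) = 1" using sd unfolding stationary_dist_def by auto
  then have "(\<Sum>y\<in>S. \<pi> y * exp (l * poisson_sum S P g m y))
      \<le> exp (l * (\<Sum>y\<in>S. \<pi> y * poisson_sum S P g m y) + l\<^sup>2 * c\<^sup>2 / 8)"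
    by (rule finite_Hoeffdings_lemma[OF fin _ _ osc l])
  then show ?case
    using sum_paths_one[OF fin, of P \<pi> "\<lambda>y. exp (l * poisson_sum S P g m y)"]
    by (simp add: stationary_poisson_sum[OF sd fin g_mean])
next
  case (Suc n)
  define \<kappa> where "\<kappa> = l\<^sup>2 * c\<^sup>2 / 8"
  define A where "A s = (\<Sum>t\<in>{1..<n}. g (s t))" for s :: "nat \<Rightarrow> 'a"
  have sum_upd: "(\<Sum>t\<in>{1..<Suc n}. g ((s(Suc n := y)) t)) = A s + g (s n)" for s y
    unfolding A_def using Suc.hyps by (simp add: sum.atLeastLessThan_Suc)
  have "(\<Sum>s\<in>paths S (Suc n). path_weight P \<pi> (Suc n) s *
            exp (l * ((\<Sum>t\<in>{1..<Suc n}. g (s t)) + poisson_sum S P g m (s (Suc n)))))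
      = (\<Sum>s\<in>paths S n. path_weight P \<pi> n s * (exp (l * A s) *
            (exp (l * g (s n)) * (\<Sum>y\<in>S. P (s n) y * exp (l * poisson_sum S P g m y)))))"
    unfolding sum_paths_Suc_weighted[OF fin Suc.hyps] sum_upd
    by (simp add: distrib_left exp_add sum_distrib_left mult_ac)
  also have "\<dots> \<le> (\<Sum>s\<in>paths S n. path_weight P \<pi> n s * (exp (l * A s) *
            exp (l * poisson_sum S P g (Suc m) (s n) + \<kappa>)))"
    using paths_mem Suc.hyps path_weight_nonneg[OF st sd _ Suc.hyps] unfolding \<kappa>_def
    by (intro sum_mono mult_left_mono poisson_step_mgf[OF fin st _ osc l]) auto
  also have "\<dots> = (\<Sum>s\<in>paths S n. path_weight P \<pi> n s *
            exp (l * (A s + poisson_sum S P g (Suc m) (s n)))) * exp \<kappa>"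
    by (simp add: sum_distrib_left sum_distrib_right distrib_left exp_add mult_ac)
  also have "\<dots> \<le> exp (real n * \<kappa>) * exp \<kappa>"
    using Suc.IH[of "Suc m"] unfolding A_def \<kappa>_def by simp
  also have "\<dots> = exp (real (Suc n) * \<kappa>)"
    by (simp add: exp_add[symmetric] algebra_simps)
  finally show ?case unfolding \<kappa>_def .
qed

text \<open>Chernoff bound for the upper tail of the path sums of \<open>g\<close>, with the optimal
  parameter \<open>l = 4 \<epsilon> / c^2\<close>.\<close>
lemma path_upper_tail:
  assumes fin: "finite S" and st: "stochastic_matrix S P" and sd: "stationary_dist S P \<pi>"
    and g_mean: "(\<Sum>x\<in>S. \<pi> x * g x) = 0" and osc: "\<And>m. osc_le S (poisson_sum S P g m) c"
    and c: "c > 0" and T: "T \<ge> 1" and \<epsilon>: "\<epsilon> > 0"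
  shows "(\<Sum>s\<in>{s\<in>paths S T. real T * \<epsilon> \<le> (\<Sum>t=1..T. g (s t))}. path_weight P \<pi> T s)
         \<le> exp (- 2 * real T * \<epsilon>\<^sup>2 / c\<^sup>2)"
proof -
  define l where "l = 4 * \<epsilon> / c\<^sup>2"
  have l: "l > 0" unfolding l_def using \<epsilon> c by simp
  have w_nonneg: "path_weight P \<pi> T s \<ge> 0" if "s \<in> paths S T" for s
    using path_weight_nonneg[OF st sd that T] .
  have sum_last: "(\<Sum>t=1..T. g (s t)) = (\<Sum>t\<in>{1..<T}. g (s t)) + poisson_sum S P g 0 (s T)"
    if "s \<in> paths S T" for s
    using T paths_mem[OF that, of T] poisson_sum_0[OF fin]
    by (simp add: atLeastLessThanSuc_atLeastAtMost[symmetric] sum.atLeastLessThan_Suc)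
  have "(\<Sum>s\<in>{s\<in>paths S T. real T * \<epsilon> \<le> (\<Sum>t=1..T. g (s t))}. path_weight P \<pi> T s)
      \<le> (\<Sum>s\<in>{s\<in>paths S T. real T * \<epsilon> \<le> (\<Sum>t=1..T. g (s t))}.
            path_weight P \<pi> T s * exp (l * ((\<Sum>t=1..T. g (s t)) - real T * \<epsilon>)))"
    using l by (intro sum_mono) (auto simp: mult_le_cancel_left1 dest!: w_nonneg)
  also have "\<dots> \<le> (\<Sum>s\<in>paths S T. path_weight P \<pi> T s * exp (l * ((\<Sum>t=1..T. g (s t)) - real T * \<epsilon>)))"
    using finite_paths[OF fin] w_nonneg by (intro sum_mono2) auto
  also have "\<dots> = (\<Sum>s\<in>paths S T. exp (- (l * real T * \<epsilon>)) *
      (path_weight P \<pi> T s * exp (l * ((\<Sum>t\<in>{1..<T}. g (s t)) + poisson_sum S P g 0 (s T)))))"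
    by (intro sum.cong refl, subst sum_last, assumption)
      (simp add: right_diff_distrib exp_diff exp_minus field_simps)
  also have "\<dots> = exp (- (l * real T * \<epsilon>)) *
      (\<Sum>s\<in>paths S T. path_weight P \<pi> T s * exp (l * ((\<Sum>t\<in>{1..<T}. g (s t)) + poisson_sum S P g 0 (s T))))"
    by (rule sum_distrib_left[symmetric])
  also have "\<dots> \<le> exp (- (l * real T * \<epsilon>)) * exp (real T * (l\<^sup>2 * c\<^sup>2 / 8))"
    by (intro mult_left_mono path_mgf[OF fin st sd g_mean osc l T]) auto
  also have "\<dots> = exp (- 2 * real T * \<epsilon>\<^sup>2 / c\<^sup>2)"
    unfolding exp_add[symmetric] l_def using c by (simp add: field_simps power2_eq_square)
  finally show ?thesis .
qed

text \<open>Two-sided bound: the lower tail of \<open>g\<close> is the upper tail of \<open>-g\<close>.\<close>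
lemma path_two_sided_tail:
  assumes fin: "finite S" and st: "stochastic_matrix S P" and sd: "stationary_dist S P \<pi>"
    and g_mean: "(\<Sum>x\<in>S. \<pi> x * g x) = 0" and osc: "\<And>m. osc_le S (poisson_sum S P g m) c"
    and c: "c > 0" and T: "T \<ge> 1" and \<epsilon>: "\<epsilon> > 0"
  shows "(\<Sum>s\<in>{s\<in>paths S T. real T * \<epsilon> \<le> \<bar>\<Sum>t=1..T. g (s t)\<bar>}. path_weight P \<pi> T s)
         \<le> 2 * exp (- 2 * real T * \<epsilon>\<^sup>2 / c\<^sup>2)"
proof -
  define U where "U = {s\<in>paths S T. real T * \<epsilon> \<le> (\<Sum>t=1..T. g (s t))}"
  define V where "V = {s\<in>paths S T. real T * \<epsilon> \<le> (\<Sum>t=1..T. - g (s t))}"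
  have w_nonneg: "path_weight P \<pi> T s \<ge> 0" if "s \<in> paths S T" for s
    using path_weight_nonneg[OF st sd that T] .
  have finUV: "finite U" "finite V" unfolding U_def V_def using finite_paths[OF fin] by auto
  have neg_mean: "(\<Sum>x\<in>S. \<pi> x * - g x) = 0" using g_mean by (simp add: sum_negf)
  have neg_osc: "osc_le S (poisson_sum S P (\<lambda>x. - g x) m) c" for m
    using osc[of m] by (simp add: poisson_sum_uminus osc_le_uminus)
  have "{s\<in>paths S T. real T * \<epsilon> \<le> \<bar>\<Sum>t=1..T. g (s t)\<bar>} \<subseteq> U \<union> V"
    unfolding U_def V_def by (auto simp: sum_negf abs_if split: if_splits)
  then have "(\<Sum>s\<in>{s\<in>paths S T. real T * \<epsilon> \<le> \<bar>\<Sum>t=1..T. g (s t)\<bar>}. path_weight P \<pi> T s)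
      \<le> (\<Sum>s\<in>U \<union> V. path_weight P \<pi> T s)"
    using finUV w_nonneg by (intro sum_mono2) (auto simp: U_def V_def)
  also have "\<dots> \<le> (\<Sum>s\<in>U. path_weight P \<pi> T s) + (\<Sum>s\<in>V. path_weight P \<pi> T s)"
    using sum.union_inter[OF finUV, of "path_weight P \<pi> T"] w_nonneg
      sum_nonneg[of "U \<inter> V" "path_weight P \<pi> T"]
    unfolding U_def by auto
  also have "\<dots> \<le> exp (- 2 * real T * \<epsilon>\<^sup>2 / c\<^sup>2) + exp (- 2 * real T * \<epsilon>\<^sup>2 / c\<^sup>2)"
    unfolding U_def V_def
    by (intro add_mono path_upper_tail[OF fin st sd g_mean osc c T \<epsilon>]
        path_upper_tail[OF fin st sd neg_mean neg_osc c T \<epsilon>])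
  finally show ?thesis by simp
qed

section \<open>Distribution of the chain\<close>

lemma cylinder_partition:
  fixes X :: "nat \<Rightarrow> 'a \<Rightarrow> 'z" and \<Omega> :: "'a set" and I :: "nat set"
  defines "C s \<equiv> {\<omega>\<in>\<Omega>. \<forall>t\<in>I. X t \<omega> = s t}"
  shows "{\<omega>\<in>\<Omega>. Q (restrict (\<lambda>t. X t \<omega>) I)} = (\<Union>s\<in>{s \<in> PiE I (\<lambda>_. UNIV). Q s}. C s)"
    and "disjoint_family_on C (PiE I (\<lambda>_. UNIV))"
proof -
  have eq: "restrict (\<lambda>t. X t \<omega>) I = s" if "s \<in> PiE I (\<lambda>_. UNIV)" "\<omega> \<in> C s" for s \<omega>
    using that unfolding C_def by (intro PiE_ext[of _ I "\<lambda>_. UNIV"]) auto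
  show "{\<omega>\<in>\<Omega>. Q (restrict (\<lambda>t. X t \<omega>) I)} = (\<Union>s\<in>{s \<in> PiE I (\<lambda>_. UNIV). Q s}. C s)"
  proof (intro set_eqI iffI)
    fix \<omega> assume "\<omega> \<in> {\<omega>\<in>\<Omega>. Q (restrict (\<lambda>t. X t \<omega>) I)}"
    then show "\<omega> \<in> (\<Union>s\<in>{s \<in> PiE I (\<lambda>_. UNIV). Q s}. C s)"
      unfolding C_def by (intro UN_I[of "restrict (\<lambda>t. X t \<omega>) I"]) auto
  next
    fix \<omega> assume "\<omega> \<in> (\<Union>s\<in>{s \<in> PiE I (\<lambda>_. UNIV). Q s}. C s)"
    then obtain s where "s \<in> PiE I (\<lambda>_. UNIV)" "Q s" "\<omega> \<in> C s" by auto
    with eq show "\<omega> \<in> {\<omega>\<in>\<Omega>. Q (restrict (\<lambda>t. X t \<omega>) I)}" unfolding C_def by auto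
  qed
  show "disjoint_family_on C (PiE I (\<lambda>_. UNIV))"
    unfolding disjoint_family_on_def using eq by blast
qed

lemma chain_event_prob:
  fixes X :: "nat \<Rightarrow> 'a \<Rightarrow> 'z"
  assumes smc: "stationary_markov_chain M X S P \<pi>" and T: "T \<ge> 1"
    and fin_states: "finite (UNIV :: 'z set)"
  shows "measure M {\<omega>\<in>space M. Q (restrict (\<lambda>t. X t \<omega>) {1..T})}
       = (\<Sum>s\<in>{s\<in>paths S T. Q s}. path_weight P \<pi> T s)"
proof -
  interpret prob_space M using smc unfolding stationary_markov_chain_def by auto
  have [measurable]: "X t \<in> measurable M (count_space (UNIV :: 'z set))" for t
    using smc unfolding stationary_markov_chain_def by auto
  define A where "A = {s \<in> PiE {1..T} (\<lambda>_. UNIV :: 'z set). Q s}"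
  define C where "C s = {\<omega>\<in>space M. \<forall>t\<in>{1..T}. X t \<omega> = s t}" for s
  have fdd: "measure M (C s) = (if s \<in> paths S T then path_weight P \<pi> T s else 0)"
    if "s \<in> A" for s
    using smc T that unfolding stationary_markov_chain_def path_weight_def C_def A_def paths_def
    by auto
  have finA: "finite A" unfolding A_def using fin_states by (auto intro: finite_subset[OF _ finite_PiE])
  have "C s \<in> sets M" for s unfolding C_def by measurable
  moreover have "disjoint_family_on C A"
    using cylinder_partition(2)[where \<Omega>="space M" and I="{1..T}" and X=X] unfolding A_def C_def
    by (rule disjoint_family_on_mono[rotated]) auto
  ultimately have "measure M {\<omega>\<in>space M. Q (restrict (\<lambda>t. X t \<omega>) {1..T})} = (\<Sum>s\<in>A. measure M (C s))"
    unfolding cylinder_partition(1)[where \<Omega>="space M" and Q=Q and I="{1..T}" and X=X] A_def[symmetric] C_def[symmetric]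
    using finA by (intro measure_finite_Union) auto
  also have "\<dots> = (\<Sum>s\<in>A. if s \<in> paths S T then path_weight P \<pi> T s else 0)"
    using fdd by (rule sum.cong[OF refl])
  also have "\<dots> = (\<Sum>s\<in>A \<inter> paths S T. path_weight P \<pi> T s)"
    by (rule sum.inter_restrict[OF finA, symmetric])
  also have "A \<inter> paths S T = {s\<in>paths S T. Q s}"
    unfolding A_def paths_def by (auto simp: PiE_iff extensional_def)
  finally show ?thesis .
qed

lemma chain_deviation_bound:
  fixes X :: "nat \<Rightarrow> 'a \<Rightarrow> 'z"
  assumes fin_states: "finite (UNIV :: 'z set)" and st: "stochastic_matrix S P"
    and sd: "stationary_dist S P \<pi>" and smc: "stationary_markov_chain M X S P \<pi>"
    and g_mean: "(\<Sum>x\<in>S. \<pi> x * g x) = 0" and osc: "\<And>m. osc_le S (poisson_sum S P g m) c"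
    and c: "c > 0" and T: "T \<ge> 1" and \<epsilon>: "\<epsilon> > 0"
  shows "measure M {\<omega>\<in>space M. real T * \<epsilon> \<le> \<bar>\<Sum>t=1..T. g (X t \<omega>)\<bar>}
         \<le> 2 * exp (- 2 * real T * \<epsilon>\<^sup>2 / c\<^sup>2)"
proof -
  have fin: "finite S" using fin_states by (rule finite_subset[OF subset_UNIV])
  have "(\<Sum>t=1..T. g (restrict (\<lambda>t. X t \<omega>) {1..T} t)) = (\<Sum>t=1..T. g (X t \<omega>))" for \<omega>
    by (intro sum.cong) auto
  then have "measure M {\<omega>\<in>space M. real T * \<epsilon> \<le> \<bar>\<Sum>t=1..T. g (X t \<omega>)\<bar>}
      = (\<Sum>s\<in>{s\<in>paths S T. real T * \<epsilon> \<le> \<bar>\<Sum>t=1..T. g (s t)\<bar>}. path_weight P \<pi> T s)"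
    using chain_event_prob[OF smc T fin_states, where Q="\<lambda>s. real T * \<epsilon> \<le> \<bar>\<Sum>t=1..T. g (s t)\<bar>"]
    by simp
  also have "\<dots> \<le> 2 * exp (- 2 * real T * \<epsilon>\<^sup>2 / c\<^sup>2)"
    by (rule path_two_sided_tail[OF fin st sd g_mean osc c T \<epsilon>])
  finally show ?thesis .
qed

lemma Min_entry:
  fixes F :: "'z \<Rightarrow> 'z \<Rightarrow> real"
  assumes fin: "finite S" and ne: "S \<noteq> {}" and pos: "\<forall>i\<in>S. \<forall>j\<in>S. F i j > 0"
  shows "Min {F i j | i j. i \<in> S \<and> j \<in> S} > 0"
    and "\<forall>i\<in>S. \<forall>j\<in>S. Min {F i j | i j. i \<in> S \<and> j \<in> S} \<le> F i j"
proof -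
  have D: "{F i j | i j. i \<in> S \<and> j \<in> S} = (\<lambda>(i, j). F i j) ` (S \<times> S)" by auto
  have "finite {F i j | i j. i \<in> S \<and> j \<in> S}" "{F i j | i j. i \<in> S \<and> j \<in> S} \<noteq> {}"
    unfolding D using fin ne by auto
  then show "Min {F i j | i j. i \<in> S \<and> j \<in> S} > 0"
    and "\<forall>i\<in>S. \<forall>j\<in>S. Min {F i j | i j. i \<in> S \<and> j \<in> S} \<le> F i j"
    using pos by (auto simp: Min_gr_iff intro!: Min_le)
qed

lemma centred_observable:
  assumes sd: "stationary_dist S P \<pi>" and bound: "\<forall>z\<in>S. \<bar>h z\<bar> \<le> B"
  shows "(\<Sum>x\<in>S. \<pi> x * (h x - (\<Sum>z\<in>S. \<pi> z * h z))) = 0"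
    and "osc_le S (\<lambda>x. h x - (\<Sum>z\<in>S. \<pi> z * h z)) (2 * B)"
proof -
  show "(\<Sum>x\<in>S. \<pi> x * (h x - (\<Sum>z\<in>S. \<pi> z * h z))) = 0"
    using sd unfolding stationary_dist_def
    by (simp add: right_diff_distrib sum_subtractf sum_distrib_right[symmetric])
  show "osc_le S (\<lambda>x. h x - (\<Sum>z\<in>S. \<pi> z * h z)) (2 * B)"
    unfolding osc_le_def
  proof (intro ballI)
    fix x y assume "x \<in> S" "y \<in> S"
    then have "\<bar>h x\<bar> \<le> B" "\<bar>h y\<bar> \<le> B" using bound by auto
    then show "h x - (\<Sum>z\<in>S. \<pi> z * h z) - (h y - (\<Sum>z\<in>S. \<pi> z * h z)) \<le> 2 * B" by linarith
  qed
qed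

lemma emp_err_deviation_event:
  assumes T: "T \<ge> 1"
  shows "{\<omega> \<in> \<Omega>. \<bar>emp_err ell f (\<lambda>t. X t \<omega>) T - e\<bar> \<ge> \<epsilon>}
       = {\<omega> \<in> \<Omega>. real T * \<epsilon> \<le> \<bar>\<Sum>t=1..T. loss ell f (X t \<omega>) - e\<bar>}"
proof -
  have "emp_err ell f zs T - e = (\<Sum>t=1..T. loss ell f (zs t) - e) / real T" for zs
    unfolding emp_err_def using T by (simp add: sum_subtractf field_simps)
  then show ?thesis using T by (auto simp: le_divide_eq mult.commute)
qed

text \<open>The bound \<open>2 exp(-2 T \<epsilon>^2 / c^2)\<close> with \<open>c = 2 B N0 / (Z \<delta>)\<close> implies the stated one, whose
  exponent is \<open>2 (T \<epsilon> - c)^2 / (T c^2)\<close>.\<close>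
lemma stated_exponent_weaker:
  fixes Z \<delta> B \<epsilon> :: real and T N0 :: nat
  assumes Z: "Z > 0" and \<delta>: "\<delta> > 0" and B: "B > 0" and N0: "N0 \<ge> 1" and T: "T \<ge> 1"
    and large: "real T * \<epsilon> > 2 * B * real N0 / (Z * \<delta>)"
  shows "exp (- 2 * real T * \<epsilon>\<^sup>2 / (2 * B * real N0 / (Z * \<delta>))\<^sup>2)
         \<le> exp (- (Z\<^sup>2 * \<delta>\<^sup>2 * (real T * \<epsilon> - 2 * B * real N0 / (Z * \<delta>))\<^sup>2)
                  / (2 * real T * B\<^sup>2 * (real N0)\<^sup>2))"
proof -
  define c where "c = 2 * B * real N0 / (Z * \<delta>)"
  have c: "c > 0" unfolding c_def using Z \<delta> B N0 by simp
  have T_pos: "real T > 0" using T by simp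
  have "(Z\<^sup>2 * \<delta>\<^sup>2 * (real T * \<epsilon> - c)\<^sup>2) / (2 * real T * B\<^sup>2 * (real N0)\<^sup>2)
      = 2 * (real T * \<epsilon> - c)\<^sup>2 / (real T * c\<^sup>2)"
    unfolding c_def using Z \<delta> B N0 T_pos by (simp add: field_simps power2_eq_square)
  also have "\<dots> \<le> 2 * (real T * \<epsilon>)\<^sup>2 / (real T * c\<^sup>2)"
    using large c T_pos unfolding c_def[symmetric]
    by (intro divide_right_mono mult_left_mono power_mono) auto
  also have "\<dots> = 2 * real T * \<epsilon>\<^sup>2 / c\<^sup>2"
    using T_pos by (simp add: field_simps power2_eq_square)
  finally show ?thesis unfolding c_def by simp
qed

theorem theorem2:
  fixes M :: "'a measure"
    and X :: "nat \<Rightarrow> 'a \<Rightarrow> ('h::finite, 'b::finite, 'n::finite) state"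
    and S :: "('h, 'b, 'n) state set"
    and P :: "('h, 'b, 'n) state \<Rightarrow> ('h, 'b, 'n) state \<Rightarrow> real"
    and \<pi> :: "('h, 'b, 'n) state \<Rightarrow> real"
    and ell :: "'b ^ 'n \<Rightarrow> 'b ^ 'n \<Rightarrow> real"
    and f :: "'h ^ 'n \<Rightarrow> 'b ^ 'n \<Rightarrow> 'b ^ 'n"
    and N0 :: nat and B :: real
  assumes "S \<noteq> {}"
    and "stochastic_matrix S P"
    and "irreducible_chain S P"
    and "aperiodic_chain S P"
    and "stationary_dist S P \<pi>"
    and "stationary_markov_chain M X S P \<pi>"
    and "N0 \<ge> 1"
    and "\<forall>i\<in>S. \<forall>j\<in>S. mat_pow S P N0 i j > 0"
    and "B > 0"
    and "\<forall>z\<in>S. \<bar>loss ell f z\<bar> \<le> B"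
  shows "\<forall>\<epsilon>>0. \<forall>T::nat.
    (let Z = real (card S);
         \<delta> = Min {mat_pow S P N0 i j | i j. i \<in> S \<and> j \<in> S}
     in real T > 2 * B * real N0 / (Z * \<delta> * \<epsilon>) \<longrightarrow>
        measure M {\<omega> \<in> space M. \<bar>emp_err ell f (\<lambda>t. X t \<omega>) T - pi_err ell f S \<pi>\<bar> \<ge> \<epsilon>}
        \<le> 2 * exp (- (Z\<^sup>2 * \<delta>\<^sup>2 * (real T * \<epsilon> - 2 * B * real N0 / (Z * \<delta>))\<^sup>2)
                    / (2 * real T * B\<^sup>2 * (real N0)\<^sup>2)))"
proof -
  define Z where "Z = real (card S)"
  define \<delta> where "\<delta> = Min {mat_pow S P N0 i j | i j. i \<in> S \<and> j \<in> S}"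
  define c where "c = 2 * B * real N0 / (Z * \<delta>)"
  define g where "g z = loss ell f z - pi_err ell f S \<pi>" for z
  have fin: "finite S" by (rule finite_subset[OF subset_UNIV]) simp
  have Z: "Z > 0" unfolding Z_def using fin assms(1) by (simp add: card_gt_0_iff)
  have \<delta>: "\<delta> > 0" and \<delta>_le: "\<forall>i\<in>S. \<forall>j\<in>S. \<delta> \<le> mat_pow S P N0 i j"
    unfolding \<delta>_def using Min_entry[OF fin assms(1,8)] by auto
  have c: "c > 0" unfolding c_def using assms(7,9) Z \<delta> by simp
  have g_mean: "(\<Sum>x\<in>S. \<pi> x * g x) = 0" and "osc_le S g (2 * B)"
    using centred_observable[OF assms(5,10)] unfolding g_def pi_err_def by auto
  then have osc: "osc_le S (poisson_sum S P g m) c" for m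
    using osc_poisson_sum[OF assms(2) fin assms(1,7) \<delta>_le \<delta>] assms(9) unfolding c_def Z_def by simp
  have "measure M {\<omega> \<in> space M. \<bar>emp_err ell f (\<lambda>t. X t \<omega>) T - pi_err ell f S \<pi>\<bar> \<ge> \<epsilon>}
      \<le> 2 * exp (- (Z\<^sup>2 * \<delta>\<^sup>2 * (real T * \<epsilon> - 2 * B * real N0 / (Z * \<delta>))\<^sup>2)
                    / (2 * real T * B\<^sup>2 * (real N0)\<^sup>2))"
    if \<epsilon>: "\<epsilon> > 0" and large: "real T > 2 * B * real N0 / (Z * \<delta> * \<epsilon>)" for \<epsilon> T
  proof -
    have "2 * B * real N0 / (Z * \<delta> * \<epsilon>) = c / \<epsilon>" unfolding c_def by simp
    then have large': "real T * \<epsilon> > c" using large \<epsilon> by (simp add: divide_less_eq mult.commute)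
    then have T: "T \<ge> 1" using c \<epsilon> by (cases T) auto
    have "measure M {\<omega> \<in> space M. \<bar>emp_err ell f (\<lambda>t. X t \<omega>) T - pi_err ell f S \<pi>\<bar> \<ge> \<epsilon>}
        = measure M {\<omega> \<in> space M. real T * \<epsilon> \<le> \<bar>\<Sum>t=1..T. g (X t \<omega>)\<bar>}"
      by (simp add: emp_err_deviation_event[OF T] g_def)
    also have "\<dots> \<le> 2 * exp (- 2 * real T * \<epsilon>\<^sup>2 / c\<^sup>2)"
      by (rule chain_deviation_bound[OF _ assms(2,5,6) g_mean osc c T \<epsilon>]) simp
    also have "\<dots> \<le> 2 * exp (- (Z\<^sup>2 * \<delta>\<^sup>2 * (real T * \<epsilon> - 2 * B * real N0 / (Z * \<delta>))\<^sup>2)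
                    / (2 * real T * B\<^sup>2 * (real N0)\<^sup>2))"
      using stated_exponent_weaker[OF Z \<delta> assms(9,7) T] large' unfolding c_def by simp
    finally show ?thesis .
  qed
  then show ?thesis unfolding Let_def Z_def[symmetric] \<delta>_def[symmetric] by blast
qed

end
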